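(* Let $q = 2^\ell$ with $\ell\ge 1$, and let $\alpha,\beta \in \mathbb{F}_{q^2}$ be such that the line $\{(\alpha t+\beta, t)\}$ is not tangent to the Hermitian curve $x^q+x=y^{q+1}$. Let $p_{\alpha,\beta}(t) = t^{q+1} + \alpha^q t^q + \alpha t + (\beta+\beta^q)$. Let $0 \leq k < q^2$ and write $k = wq + z$ with $0 \le z < q$. Suppose that either $w = 0$, or there exists $1 \leq i \leq \ell$ such that $w \equiv 0 \pmod{2^i}$ and $z \not\equiv -1 \pmod{2^i}$. Then the remainder of $t^k$ upon division by $p_{\alpha,\beta}(t)$ in $\mathbb{F}_{q^2}[t]$ has degree strictly less than $q$. *)

theory Defs
  imports "HOL-Computational_Algebra.Polynomial" "HOL-Number_Theory.Cong" "HOL-Library.Cardinality"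
begin

definition hermitian :: "nat \<Rightarrow> 'a::field \<Rightarrow> 'a \<Rightarrow> bool" where
  "hermitian q x y \<longleftrightarrow> x ^ q + x = y ^ (q + 1)"

text \<open>The line  {(alpha t + beta, t)}  is tangent to the curve F(x,y) = x^q + x - y^(q+1) = 0
  at some point of the curve lying on it: the point P = (alpha t0 + beta, t0) is on the curve
  and the direction vector (alpha, 1) of the line is orthogonal to the gradient
  (F_x(P), F_y(P)) = (q x0^(q-1) + 1, -(q+1) t0^q), i.e. the line is the tangent line at P.\<close>
definition line_tangent_hermitian :: "nat \<Rightarrow> 'a::field \<Rightarrow> 'a \<Rightarrow> bool" where
  "line_tangent_hermitian q \<alpha> \<beta> \<longleftrightarrow>
     (\<exists>t0. hermitian q (\<alpha> * t0 + \<beta>) t0 \<and>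
        \<alpha> * (of_nat q * (\<alpha> * t0 + \<beta>) ^ (q - 1) + 1) + 1 * (- (of_nat (q + 1) * t0 ^ q)) = 0)"

definition p_ab :: "nat \<Rightarrow> 'a::field \<Rightarrow> 'a \<Rightarrow> 'a poly" where
  "p_ab q \<alpha> \<beta> = monom 1 (q + 1) + monom (\<alpha> ^ q) q + monom \<alpha> 1 + [:\<beta> + \<beta> ^ q:]"

end

theory Submission
  imports Defs
begin

(*
  Put a = alpha^q. In characteristic 2 the Frobenius map gives (t + a)^q = t^q + a^q, and
  a^q = alpha because alpha^(q^2) = alpha; hence p = (t + a)^(q+1) - g for a constant g.
  Expanding t^k = ((t + a) - a)^k and reducing each (t + a)^j with (t + a)^(q+1) = g modulo p
  leaves a combination of the powers (t + a)^r with r <= q, and the remainder has degree q only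
  through the indices j = n q + (n - 1).  By Lucas' theorem in base q, binom(k, j) is congruent
  to binom(w, n) binom(z, n - 1) mod 2, and the hypothesis on w and z makes this product even.
*)

lemma power_card_eq_self:
  fixes x :: "'a::{field,finite}"
  shows "x ^ CARD('a) = x"
proof (cases "x = 0")
  case False
  have "x * (\<Prod>y\<in>UNIV-{0}. x * y) = x * x ^ (CARD('a) - 1) * \<Prod>(UNIV-{0})"
    by (simp add: prod.distrib mult_ac)
  also have "x * x ^ (CARD('a) - 1) = x ^ CARD('a)"
    by (simp flip: power_Suc)
  also have "(\<Prod>y\<in>UNIV-{0}. x * y) = (\<Prod>y\<in>UNIV-{0}. y)"
    by (rule prod.reindex_bij_witness[of _ "\<lambda>y. y / x" "\<lambda>y. x * y"]) (use False in auto)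
  finally show ?thesis
    by simp
qed simp

lemma CHAR_eq_2_if_even_card:
  assumes "even CARD('a::{field,finite})"
  shows "CHAR('a) = 2"
proof (rule CHAR_eq_posI)
  have "(-1 :: 'a) = 1"
    using power_card_eq_self[of "-1 :: 'a"] assms by simp
  then show "of_nat 2 = (0 :: 'a)"
    by (metis add.right_inverse of_nat_numeral one_add_one)
qed (auto simp: less_2_cases_iff)

lemma coeff_pcompose_monom_mult:
  fixes p g :: "'b::comm_ring_1 poly"
  assumes "degree g < B" "m0 < B"
  shows "coeff (pcompose p (monom 1 B) * g) (m1 * B + m0) = coeff p m1 * coeff g m0"
  using assms
proof (induction p arbitrary: m1 rule: pCons_induct)
  case (pCons c p)
  have split: "pcompose (pCons c p) (monom 1 B) * g =
                 smult c g + monom 1 B * (pcompose p (monom 1 B) * g)"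
    by (simp add: pcompose_pCons algebra_simps)
  show ?case
  proof (cases m1)
    case 0
    then show ?thesis using pCons.prems by (simp add: split coeff_monom_mult)
  next
    case (Suc m)
    have "coeff g (m1 * B + m0) = 0" using pCons.prems Suc by (intro coeff_eq_0) auto
    then show ?thesis using pCons.IH[of m] pCons.prems Suc by (simp add: split coeff_monom_mult)
  qed
qed simp

lemma coeff_one_plus_X_power: "coeff ([:1, 1:] ^ n) i = (of_nat (n choose i) :: 'b::comm_semiring_1)"
proof (cases "i \<le> n")
  case False
  then show ?thesis by (simp add: coeff_eq_0 degree_linear_power binomial_eq_0)
qed (simp add: coeff_linear_poly_power)

lemma pcompose_power: "pcompose (p ^ n) q = pcompose p q ^ n"
  by (induction n) (simp_all add: pcompose_mult pcompose_1)

lemma of_nat_binomial_digits_CHAR_2: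
  assumes "CHAR('b::comm_ring_1) = 2" and "B = 2 ^ e" and "z0 < B" and "m0 < B"
  shows "(of_nat ((z1 * B + z0) choose (m1 * B + m0)) :: 'b) =
           of_nat (z1 choose m1) * of_nat (z0 choose m0)"
proof -
  have "[:1::'b, 1:] ^ B = (1 + monom 1 1) ^ B"
    by (simp add: monom_Suc one_pCons)
  also have "\<dots> = 1 + monom 1 B"
    using assms(1,2) by (simp add: freshmans_dream' monom_power)
  also have "\<dots> = pcompose [:1, 1:] (monom 1 B)"
    by (simp add: pcompose_pCons)
  finally have "[:1::'b, 1:] ^ (z1 * B + z0) = pcompose ([:1, 1:] ^ z1) (monom 1 B) * [:1, 1:] ^ z0"
    by (simp add: power_add power_mult pcompose_power mult.commute[of z1 B])
  moreover have "degree ([:1::'b, 1:] ^ z0) < B"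
    using assms(3) by (simp add: degree_linear_power)
  ultimately have "coeff ([:1::'b, 1:] ^ (z1 * B + z0)) (m1 * B + m0) =
                     coeff ([:1, 1:] ^ z1) m1 * coeff ([:1, 1:] ^ z0) m0"
    using coeff_pcompose_monom_mult assms(4) by metis
  then show ?thesis
    by (simp only: coeff_one_plus_X_power)
qed

lemma binomial_pair_vanishes_CHAR_2:
  assumes char: "CHAR('b::comm_ring_1) = 2" and "2 ^ i dvd w" and z: "z mod 2 ^ i \<noteq> 2 ^ i - 1"
    and "n \<ge> 1"
  shows "(of_nat (w choose n) * of_nat (z choose (n - 1)) :: 'b) = 0"
proof -
  define B :: nat where "B = 2 ^ i"
  have "B > 0"
    by (simp add: B_def)
  (* Digitwise in base B: binom(w, n) is odd only if B divides n, and then the low digit of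
     n - 1 is B - 1, which exceeds the low digit of z. *)
  show ?thesis
  proof (cases "B dvd n")
    case False
    obtain w' where "w = w' * B"
      using assms(2) unfolding B_def by (metis dvd_def mult.commute)
    moreover have "n = n div B * B + n mod B" "n mod B < B"
      using \<open>B > 0\<close> by simp_all
    ultimately have "(of_nat (w choose n) :: 'b) =
                       of_nat (w' choose n div B) * of_nat (0 choose n mod B)"
      using of_nat_binomial_digits_CHAR_2[OF char B_def, of 0 "n mod B" w' "n div B"] by simp
    then show ?thesis
      using False by (simp add: binomial_eq_0 dvd_eq_mod_eq_0)
  next
    case True
    then obtain c where c: "n = c * B"
      by (metis dvd_def mult.commute)
    with \<open>n \<ge> 1\<close> have "c * B \<ge> B"
      by (cases c) auto
    then have "n - 1 = (c - 1) * B + (B - 1)"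
      using c \<open>B > 0\<close> by (simp add: diff_mult_distrib)
    moreover have "z mod B < B - 1"
      using z mod_less_divisor[OF \<open>B > 0\<close>, of z] unfolding B_def[symmetric] by linarith
    moreover have "z = z div B * B + z mod B"
      by simp
    ultimately have "(of_nat (z choose (n - 1)) :: 'b) =
                       of_nat (z div B choose (c - 1)) * of_nat (z mod B choose (B - 1))"
      using of_nat_binomial_digits_CHAR_2[OF char B_def, of "z mod B" "B - 1" "z div B" "c - 1"]
        \<open>B > 0\<close> by simp
    then show ?thesis
      using \<open>z mod B < B - 1\<close> by (simp add: binomial_eq_0)
  qed
qed

lemma binomial_vanishes_CHAR_2:
  assumes char: "CHAR('b::comm_ring_1) = 2" and q: "q = 2 ^ l" and "k < q ^ 2"
    and digits: "k div q = 0 \<or> (\<exists>i. 2 ^ i dvd k div q \<and> k mod q mod 2 ^ i \<noteq> 2 ^ i - 1)"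
    and "j \<le> k" and "j mod (q + 1) = q"
  shows "(of_nat (k choose j) :: 'b) = 0"
proof -
  define n where "n = j div (q + 1) + 1"
  have j: "j = n * q + (n - 1)"
    using \<open>j mod (q + 1) = q\<close> div_mult_mod_eq[of j "q + 1"] by (simp add: n_def algebra_simps)
  then have "n * q < q * q"
    using \<open>j \<le> k\<close> \<open>k < q ^ 2\<close> unfolding power2_eq_square by linarith
  then have "n < q"
    by simp
  have "(of_nat (k choose j) :: 'b) = of_nat ((k div q * q + k mod q) choose (n * q + (n - 1)))"
    using j by simp
  also have "\<dots> = of_nat (k div q choose n) * of_nat (k mod q choose (n - 1))"
    using \<open>n < q\<close> q by (intro of_nat_binomial_digits_CHAR_2[OF char q]) simp_all
  finally have binom: "(of_nat (k choose j) :: 'b) =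
                         of_nat (k div q choose n) * of_nat (k mod q choose (n - 1))" .
  have "n \<ge> 1"
    by (simp add: n_def)
  from digits show ?thesis
  proof
    assume "k div q = 0"
    then show ?thesis
      using binom \<open>n \<ge> 1\<close> by (simp add: binomial_eq_0)
  next
    assume "\<exists>i. 2 ^ i dvd k div q \<and> k mod q mod 2 ^ i \<noteq> 2 ^ i - 1"
    then obtain i where "2 ^ i dvd k div q" "k mod q mod 2 ^ i \<noteq> 2 ^ i - 1"
      by blast
    then have "(of_nat (k div q choose n) * of_nat (k mod q choose (n - 1)) :: 'b) = 0"
      using binomial_pair_vanishes_CHAR_2[OF char _ _ \<open>n \<ge> 1\<close>] by blast
    then show ?thesis
      using binom by simp
  qed
qed

lemma cong_int_minus_one_iff:
  assumes "m > 0"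
  shows "[int z = - 1] (mod int m) \<longleftrightarrow> z mod m = m - 1"
proof -
  have "[int z = - 1] (mod int m) \<longleftrightarrow> int (z mod m) = int m - 1"
    using assms by (simp add: cong_def zmod_int zmod_minus1)
  also have "\<dots> \<longleftrightarrow> z mod m = m - 1"
    using assms by linarith
  finally show ?thesis .
qed

lemma dvd_power_reduce_mod:
  fixes x c :: "'b::comm_ring_1"
  shows "(x ^ m - c) dvd (x ^ j - c ^ (j div m) * x ^ (j mod m))"
proof -
  have "x ^ j - c ^ (j div m) * x ^ (j mod m) =
          ((x ^ m) ^ (j div m) - c ^ (j div m)) * x ^ (j mod m)"
    by (simp add: algebra_simps flip: power_mult power_add)
  moreover have "(x ^ m - c) dvd ((x ^ m) ^ (j div m) - c ^ (j div m))"
    unfolding power_diff_sumr2 by (rule dvd_triv_left)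
  ultimately show ?thesis
    by simp
qed

lemma p_ab_eq_shifted_power:
  fixes \<alpha> \<beta> :: "'b::field"
  assumes char: "CHAR('b) = 2" and q: "q = 2 ^ l" and fixed: "\<alpha> ^ (q ^ 2) = \<alpha>"
  shows "p_ab q \<alpha> \<beta> = [:\<alpha> ^ q, 1:] ^ (q + 1) - [:\<alpha> * \<alpha> ^ q - (\<beta> + \<beta> ^ q):]"
proof -
  define a where "a = \<alpha> ^ q"
  have "a ^ q = \<alpha>"
    using fixed by (simp add: a_def power2_eq_square flip: power_mult)
  have "[:a, 1:] ^ q = (monom 1 1 + [:a:]) ^ q"
    by (simp add: monom_Suc one_pCons)
  also have "\<dots> = monom 1 q + [:\<alpha>:]"
    using char q \<open>a ^ q = \<alpha>\<close> by (simp add: freshmans_dream' monom_power poly_const_pow)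
  finally have "[:a, 1:] ^ (q + 1) = (monom 1 q + [:\<alpha>:]) * (monom 1 1 + [:a:])"
    by (simp add: monom_Suc one_pCons)
  also have "\<dots> = monom 1 (q + 1) + monom a q + monom \<alpha> 1 + [:\<alpha> * a:]"
    by (simp add: algebra_simps mult_monom monom_0 smult_monom)
  finally show ?thesis
    by (simp add: p_ab_def a_def monom_0)
qed

lemma monom_mod_shifted_power_minus_const:
  fixes a g :: "'b::field"
  assumes "m > 0"
  shows "monom 1 k mod ([:a, 1:] ^ m - [:g:]) =
           (\<Sum>j\<le>k. smult (of_nat (k choose j) * (-a) ^ (k - j) * g ^ (j div m))
                          ([:a, 1:] ^ (j mod m)))"
    (is "_ = ?R")
proof -
  let ?s = "[:a, 1:]" and ?c = "\<lambda>j. of_nat (k choose j) * (-a) ^ (k - j)"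
  have "monom 1 k = (?s + [:-a:]) ^ k"
    by (simp add: monom_altdef)
  also have "\<dots> = (\<Sum>j\<le>k. of_nat (k choose j) * ?s ^ j * [:-a:] ^ (k - j))"
    by (rule binomial_ring)
  also have "\<dots> = (\<Sum>j\<le>k. smult (?c j) (?s ^ j))"
    by (rule sum.cong) (simp_all add: poly_const_pow of_nat_poly mult.commute)
  finally have "monom 1 k - ?R =
                  (\<Sum>j\<le>k. smult (?c j) (?s ^ j - [:g:] ^ (j div m) * ?s ^ (j mod m)))"
    by (simp add: sum_subtractf[symmetric] smult_diff_right poly_const_pow mult_ac)
  also have "(?s ^ m - [:g:]) dvd \<dots>"
    by (intro dvd_sum dvd_smult dvd_power_reduce_mod)
  finally have "monom 1 k mod (?s ^ m - [:g:]) = ?R mod (?s ^ m - [:g:])"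
    by (simp add: mod_eq_dvd_iff)
  moreover have "degree ?R \<le> m - 1"
  proof (intro degree_sum_le order.trans[OF degree_smult_le])
    show "degree (?s ^ (j mod m)) \<le> m - 1" for j
      using mod_less_divisor[OF \<open>m > 0\<close>, of j] by (simp add: degree_linear_power)
  qed simp
  moreover have "degree (?s ^ m - [:g:]) = m"
    unfolding diff_conv_add_uminus using \<open>m > 0\<close>
    by (subst degree_add_eq_left) (simp_all add: degree_linear_power)
  ultimately show ?thesis
    using \<open>m > 0\<close> mod_poly_less[of ?R "?s ^ m - [:g:]"] by simp
qed

lemma degree_monom_mod_shifted_power_minus_const_less:
  fixes a g :: "'b::field"
  assumes "m \<ge> 2"
    and vanish: "\<And>j. j \<le> k \<Longrightarrow> j mod m = m - 1 \<Longrightarrow> (of_nat (k choose j) :: 'b) = 0"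
  shows "degree (monom 1 k mod ([:a, 1:] ^ m - [:g:])) < m - 1"
proof -
  let ?T = "\<lambda>j. smult (of_nat (k choose j) * (-a) ^ (k - j) * g ^ (j div m))
                         ([:a, 1:] ^ (j mod m))"
  have "degree (?T j) \<le> m - 2" if "j \<le> k" for j
  proof (cases "j mod m = m - 1")
    case True
    then show ?thesis
      using vanish \<open>j \<le> k\<close> by simp
  next
    case False
    moreover have "j mod m < m"
      using \<open>m \<ge> 2\<close> by simp
    ultimately have "j mod m \<le> m - 2"
      by linarith
    then show ?thesis
      by (intro order.trans[OF degree_smult_le]) (simp add: degree_linear_power)
  qed
  then have "degree (\<Sum>j\<le>k. ?T j) \<le> m - 2"
    by (intro degree_sum_le) auto
  then show ?thesis
    using \<open>m \<ge> 2\<close> by (simp add: monom_mod_shifted_power_minus_const)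
qed

theorem mainTheorem7:
  fixes \<alpha> \<beta> :: "'a::{field,finite}"
    and l q k w z :: nat
  assumes "l \<ge> 1"
    and "q = 2 ^ l"
    and "CARD('a) = q ^ 2"
    and "\<not> line_tangent_hermitian q \<alpha> \<beta>"
    and "k < q ^ 2"
    and "w = k div q" and "z = k mod q"
    and "w = 0 \<or> (\<exists>i. 1 \<le> i \<and> i \<le> l \<and> [w = 0] (mod 2 ^ i) \<and>
                       \<not> [int z = - 1] (mod 2 ^ i))"
  shows "degree (monom 1 k mod p_ab q \<alpha> \<beta>) < q"
proof -
  have "q \<ge> 2"
    using assms(1,2) by (cases l) auto
  have char: "CHAR('a) = 2"
    using assms(1-3) by (intro CHAR_eq_2_if_even_card) simp
  have "\<alpha> ^ (q ^ 2) = \<alpha>"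
    using power_card_eq_self[of \<alpha>] assms(3) by simp
  then have p: "p_ab q \<alpha> \<beta> = [:\<alpha> ^ q, 1:] ^ (q + 1) - [:\<alpha> * \<alpha> ^ q - (\<beta> + \<beta> ^ q):]"
    by (rule p_ab_eq_shifted_power[OF char assms(2)])
  have digits: "k div q = 0 \<or> (\<exists>i. 2 ^ i dvd k div q \<and> k mod q mod 2 ^ i \<noteq> 2 ^ i - 1)"
    using assms(6-8) cong_int_minus_one_iff[of "2 ^ _" "k mod q"] by (auto simp: cong_0_iff)
  have "degree (monom 1 k mod p_ab q \<alpha> \<beta>) < q + 1 - 1"
    unfolding p
  proof (rule degree_monom_mod_shifted_power_minus_const_less)
    show "of_nat (k choose j) = (0 :: 'a)" if "j \<le> k" "j mod (q + 1) = q + 1 - 1" for j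
      using binomial_vanishes_CHAR_2[OF char assms(2,5) digits] that by simp
  qed (use \<open>q \<ge> 2\<close> in simp)
  then show ?thesis
    by simp
qed

end
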